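(* Consider the finite-horizon betting problem described in the context, with horizon $H\in\mathbb{N}$ and CRRA utility $u_1(\cdot;\alpha)$, $\alpha\ge 0$ (so $u_1(w;\alpha)=w^\alpha/\alpha$ if $\alpha>0$ and $u_1(w;0)=\ln w$). Then the optimal betting policy $\pi^*_{(\theta,u_1,H)}$, defined by the Bellman recursion of the context, is independent of the wealth variable: for every deck $\mathbf d\in\Omega$, every round index $n<H$ and all $w,w'>0$, $$\pi^*_{(\theta,u_1,H)}(\mathbf d,w,n)=\pi^*_{(\theta,u_1,H)}(\mathbf d,w',n),$$ i.e. the set of maximizing bets $b\in[0,0.5]$ in the Bellman equation at state $(\mathbf d,w,n)$ is the same as at $(\mathbf d,w',n)$.
   Context: A player repeatedly plays rounds of a card game (Blackjack) against a dealer, following a fixed in-round decision rule $\theta$. The composition of the deck before each round (the "origin deck") lies in a finite set $\Omega\subset\mathbb{Z}_{\ge0}^{10}$ and the sequence of origin decks $\mathbf d_0,\mathbf d_1,\dots$ (starting from the full deck $\bar{\mathbf d}$) together with the round returns forms a time-homogeneous process: the return $X_\theta^{\mathbf d_n}$ of round $n$ (per unit bet) takes values in $R=\{-2,-1,0,1,1.5,2\}$, and the joint probability $p(\mathbf d',x\mid\mathbf d)=\mathbb P(\mathbf d_{n+1}=\mathbf d',X^{\mathbf d}_\theta=x\mid \mathbf d_n=\mathbf d)$ depends only on $\mathbf d,\mathbf d',x$ (not on $n$ nor on the bets or wealth). Before round $n$ the player, with wealth $W_n$ ($W_0=1$), bets a fraction $\pi_n\in[0,0.5]$ of wealth, and $W_{n+1}=(1+\pi_n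 X_\theta^{\mathbf d_n})W_n$. States are $\psi=(\mathbf d,w,n)$ with $\mathbf d\in\Omega$, $w>0$, $n\in\mathbb Z_{\ge 0}$; a betting policy is a map $\pi$ from states to $[0,0.5]$. The utility is $u_1(w;\alpha)=w^\alpha/\alpha$ for $\alpha>0$ and $\ln w$ for $\alpha=0$. The optimal value and optimal policy for horizon $H$ are defined by $V^*(\mathbf d,w,H)=u_1(w;\alpha)$ and, for $n<H$, $$V^*(\mathbf d,w,n)=\max_{b\in[0,0.5]}\sum_{x\in R}\sum_{\mathbf d'}p(\mathbf d',x\mid\mathbf d)\,V^*(\mathbf d',w(1+bx),n+1),$$ with $\pi^*_{(\theta,u_1,H)}(\mathbf d,w,n)$ the argmax of the same expression. *)

theory Defs
  imports "HOL-Analysis.Analysis" "HOL-Library.Extended_Real"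
begin

text \<open>Decks are compositions in Z_{>=0}^10, represented as lists of naturals of length 10.
  The transition kernel p d d' x = P(d_{n+1} = d', X = x | d_n = d).
  Values are extended reals so that ln 0 = -infinity (wealth can hit 0 when betting
  b = 1/2 and the return is -2).\<close>

type_synonym deck = "nat list"

definition returns :: "real set" where
  "returns = {-2, -1, 0, 1, 3/2, 2}"

definition bets :: "real set" where
  "bets = {0..1/2}"

definition u1 :: "real \<Rightarrow> real \<Rightarrow> ereal" where
  "u1 alpha w = (if alpha = 0 then (if w = 0 then -\<infinity> else ereal (ln w))
                 else ereal (w powr alpha / alpha))"

definition Qval :: "deck set \<Rightarrow> (deck \<Rightarrow> deck \<Rightarrow> real \<Rightarrow> real)
    \<Rightarrow> (deck \<Rightarrow> real \<Rightarrow> ereal) \<Rightarrow> deck \<Rightarrow> real \<Rightarrow> real \<Rightarrow> ereal" where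
  "Qval Omega p V d w b =
     (\<Sum>x\<in>returns. \<Sum>d'\<in>Omega. ereal (p d d' x) * V d' (w * (1 + b * x)))"

text \<open>Value with k rounds remaining (Bellman recursion, max taken as Sup).\<close>
fun Vrem :: "real \<Rightarrow> deck set \<Rightarrow> (deck \<Rightarrow> deck \<Rightarrow> real \<Rightarrow> real)
    \<Rightarrow> nat \<Rightarrow> deck \<Rightarrow> real \<Rightarrow> ereal" where
  "Vrem alpha Omega p 0 d w = u1 alpha w"
| "Vrem alpha Omega p (Suc k) d w =
     (SUP b\<in>bets. Qval Omega p (Vrem alpha Omega p k) d w b)"

definition Vstar :: "real \<Rightarrow> deck set \<Rightarrow> (deck \<Rightarrow> deck \<Rightarrow> real \<Rightarrow> real)
    \<Rightarrow> nat \<Rightarrow> deck \<Rightarrow> real \<Rightarrow> nat \<Rightarrow> ereal" where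
  "Vstar alpha Omega p H d w n = Vrem alpha Omega p (H - n) d w"

definition optimal_bets :: "real \<Rightarrow> deck set \<Rightarrow> (deck \<Rightarrow> deck \<Rightarrow> real \<Rightarrow> real)
    \<Rightarrow> nat \<Rightarrow> deck \<Rightarrow> real \<Rightarrow> nat \<Rightarrow> real set" where
  "optimal_bets alpha Omega p H d w n =
     {b \<in> bets. \<forall>b'\<in>bets.
        Qval Omega p (\<lambda>d' w'. Vstar alpha Omega p H d' w' (Suc n)) d w b' \<le>
        Qval Omega p (\<lambda>d' w'. Vstar alpha Omega p H d' w' (Suc n)) d w b}"

end

theory Submission
  imports Defs
begin

text \<open>Both CRRA utilities are affine in the utility of a rescaled wealth:
  \<open>u\<^sub>1(c w) = a + k u\<^sub>1(w)\<close> with \<open>k > 0\<close> (\<open>a = ln c, k = 1\<close> for the logarithm,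
  \<open>a = 0, k = c\<^sup>\<alpha>\<close> for the power utility). Since the wealth enters the next
  round only multiplied by \<open>1 + b x\<close> and the transition probabilities sum to one,
  backward induction carries this identity to every value function and to every
  expected next-stage value. Hence changing the wealth from \<open>w\<close> to \<open>c w\<close> transforms
  the objective of the Bellman equation by the strictly increasing map
  \<open>v \<mapsto> a + k v\<close>, which leaves the set of maximizing bets unchanged.\<close>

lemma one_plus_bet_times_return_nonneg:
  assumes "b \<in> bets" and "x \<in> returns"
  shows "0 \<le> 1 + b * x"
proof -
  have "0 \<le> b" "b \<le> 1/2" "-2 \<le> x"
    using assms by (auto simp: bets_def returns_def)
  then have "b * (-2) \<le> b * x"
    by (intro mult_left_mono)
  with \<open>b \<le> 1/2\<close> show ?thesis
    by linarith
qed

lemma u1_mult_wealth: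
  assumes "alpha \<ge> 0" and "c > 0"
  obtains a k where "k > 0"
    and "\<And>w. w \<ge> 0 \<Longrightarrow> u1 alpha (c * w) = ereal a + ereal k * u1 alpha w"
proof (cases "alpha = 0")
  case True
  show ?thesis
  proof
    show "u1 alpha (c * w) = ereal (ln c) + ereal 1 * u1 alpha w" if "w \<ge> 0" for w
      using True \<open>c > 0\<close> that by (auto simp: u1_def ln_mult)
  qed simp
next
  case False
  show ?thesis
  proof
    show "u1 alpha (c * w) = ereal 0 + ereal (c powr alpha) * u1 alpha w" if "w \<ge> 0" for w
      using False \<open>c > 0\<close> that by (simp add: u1_def powr_mult)
  qed (use \<open>c > 0\<close> in simp)
qed

lemma Qval_mult_wealth:
  assumes p_nonneg: "\<forall>d'. \<forall>x. p d d' x \<ge> 0"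
    and p_sum: "(\<Sum>x\<in>returns. \<Sum>d'\<in>Omega. p d d' x) = 1"
    and "k \<ge> 0"
    and V: "\<And>d' v. d' \<in> Omega \<Longrightarrow> v \<ge> 0 \<Longrightarrow> V d' (c * v) = ereal a + ereal k * V d' v"
    and "w \<ge> 0" and "b \<in> bets"
  shows "Qval Omega p V d (c * w) b = ereal a + ereal k * Qval Omega p V d w b"
proof -
  have distrib: "ereal q * (ereal a + ereal k * v) = ereal (q * a) + ereal q * v * ereal k"
    if "q \<ge> 0" for q and v :: ereal
    using that \<open>k \<ge> 0\<close> by (cases v) (auto simp: algebra_simps)
  have "Qval Omega p V d (c * w) b =
      (\<Sum>x\<in>returns. \<Sum>d'\<in>Omega. ereal (p d d' x * a) + ereal (p d d' x) * V d' (w * (1 + b * x)) * ereal k)"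
    unfolding Qval_def
  proof (intro sum.cong refl)
    fix x d' assume "x \<in> returns" "d' \<in> Omega"
    with V[of d' "w * (1 + b * x)"] \<open>w \<ge> 0\<close> \<open>b \<in> bets\<close>
    have "V d' (c * w * (1 + b * x)) = ereal a + ereal k * V d' (w * (1 + b * x))"
      by (simp add: one_plus_bet_times_return_nonneg mult.assoc)
    then show "ereal (p d d' x) * V d' (c * w * (1 + b * x)) =
        ereal (p d d' x * a) + ereal (p d d' x) * V d' (w * (1 + b * x)) * ereal k"
      using p_nonneg by (simp add: distrib)
  qed
  also have "\<dots> = ereal (\<Sum>x\<in>returns. \<Sum>d'\<in>Omega. p d d' x * a) + Qval Omega p V d w b * ereal k"
    unfolding Qval_def using \<open>k \<ge> 0\<close> by (simp add: sum.distrib sum_distrib_right_ereal)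
  also have "(\<Sum>x\<in>returns. \<Sum>d'\<in>Omega. p d d' x * a) = a"
    using p_sum by (simp add: sum_distrib_right[symmetric])
  finally show ?thesis
    by (simp add: mult.commute)
qed

lemma Vrem_mult_wealth:
  assumes p_nonneg: "\<forall>d\<in>Omega. \<forall>d'. \<forall>x. p d d' x \<ge> 0"
    and p_sum: "\<forall>d\<in>Omega. (\<Sum>x\<in>returns. \<Sum>d'\<in>Omega. p d d' x) = 1"
    and "k \<ge> 0"
    and u1: "\<And>w. w \<ge> 0 \<Longrightarrow> u1 alpha (c * w) = ereal a + ereal k * u1 alpha w"
    and "d \<in> Omega" and "w \<ge> 0"
  shows "Vrem alpha Omega p m d (c * w) = ereal a + ereal k * Vrem alpha Omega p m d w"
  using \<open>d \<in> Omega\<close> \<open>w \<ge> 0\<close>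
proof (induction m arbitrary: d w)
  case 0
  then show ?case
    by (simp add: u1)
next
  case (Suc m)
  let ?Q = "Qval Omega p (Vrem alpha Omega p m) d w"
  have "Qval Omega p (Vrem alpha Omega p m) d (c * w) b = ereal a + ereal k * ?Q b"
    if "b \<in> bets" for b
    using p_nonneg p_sum Suc \<open>k \<ge> 0\<close> that by (intro Qval_mult_wealth) auto
  then have "Vrem alpha Omega p (Suc m) d (c * w) = (SUP b\<in>bets. ereal k * ?Q b + ereal a)"
    by (simp add: add.commute)
  also have "\<dots> = ereal k * (SUP b\<in>bets. ?Q b) + ereal a"
    using \<open>k \<ge> 0\<close> by (simp add: SUP_ereal_add_left Sup_ereal_mult_left' bets_def)
  finally show ?case
    by (simp add: add.commute)
qed

lemma strict_mono_ereal_affine: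
  assumes "k > 0"
  shows "strict_mono (\<lambda>v. ereal a + ereal k * v)"
proof
  fix v v' :: ereal assume "v < v'"
  with \<open>k > 0\<close> show "ereal a + ereal k * v < ereal a + ereal k * v'"
    by (cases v; cases v') auto
qed

lemma argmax_strict_mono_comp:
  fixes f :: "'b::linorder \<Rightarrow> 'c::linorder"
  assumes "strict_mono f" and "\<And>b. b \<in> S \<Longrightarrow> h b = f (g b)"
  shows "{b \<in> S. \<forall>b'\<in>S. h b' \<le> h b} = {b \<in> S. \<forall>b'\<in>S. g b' \<le> g b}"
  using assms by (auto simp: strict_mono_less_eq)

theorem theorem1:
  fixes Omega :: "deck set" and p :: "deck \<Rightarrow> deck \<Rightarrow> real \<Rightarrow> real"
    and alpha :: real and H n :: nat and d :: deck and w w' :: real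
  assumes "finite Omega"
    and "\<forall>d'\<in>Omega. length d' = 10"
    and "\<forall>d'\<in>Omega. \<forall>d''. \<forall>x. p d' d'' x \<ge> 0"
    and "\<forall>d'\<in>Omega. (\<Sum>x\<in>returns. \<Sum>d''\<in>Omega. p d' d'' x) = 1"
    and "alpha \<ge> 0"
    and "d \<in> Omega" and "n < H" and "w > 0" and "w' > 0"
  shows "optimal_bets alpha Omega p H d w n = optimal_bets alpha Omega p H d w' n"
proof -
  define c where "c = w' / w"
  have "c > 0" and w': "w' = c * w"
    using \<open>w > 0\<close> \<open>w' > 0\<close> by (auto simp: c_def)
  obtain a k where "k > 0"
    and u1: "\<And>v. v \<ge> 0 \<Longrightarrow> u1 alpha (c * v) = ereal a + ereal k * u1 alpha v"
    using u1_mult_wealth[OF \<open>alpha \<ge> 0\<close> \<open>c > 0\<close>] by blast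
  define V where "V = (\<lambda>d' v. Vstar alpha Omega p H d' v (Suc n))"
  have "V d' (c * v) = ereal a + ereal k * V d' v" if "d' \<in> Omega" "v \<ge> 0" for d' v
    unfolding V_def Vstar_def
    using Vrem_mult_wealth[OF assms(3,4) _ u1 that] \<open>k > 0\<close> by simp
  then have "Qval Omega p V d w' b = ereal a + ereal k * Qval Omega p V d w b" if "b \<in> bets" for b
    unfolding w' using Qval_mult_wealth[OF _ _ _ _ _ that] assms(3,4,6) \<open>k > 0\<close> \<open>w > 0\<close> by simp
  then show ?thesis
    unfolding optimal_bets_def V_def[symmetric]
    by (intro argmax_strict_mono_comp[OF strict_mono_ereal_affine[OF \<open>k > 0\<close>], symmetric])
qed

end
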